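(* Let $\mathcal{D}$ be a probability distribution on $\mathcal{X}\times\mathcal{Y}$ with $\mathcal{Y}=\{1,\dots,K\}$, and let $\rho$ be a probability distribution over classifiers $h:\mathcal{X}\to\mathcal{Y}$. Let $W_\rho=W_\rho(X,Y)=\mathbb{E}_{h\sim\rho}[\mathbb{1}(h(X)\neq Y)]$ for $(X,Y)\sim\mathcal{D}$, and $\bar W_\rho=1-W_\rho$. Suppose $\rho$ is competent, i.e. for every $0\le t\le 1/2$, $$\mathbb{P}_{\mathcal{D}}\big(W_\rho\in[t,1/2)\big)\;\ge\;\mathbb{P}_{\mathcal{D}}\big(W_\rho\in[1/2,1-t]\big).$$ Then for any increasing function $h:[0,1]\to\mathbb{R}$ with $h(0)=0$, $$\mathbb{E}_{\mathcal{D}}\big[h(W_\rho)\mathbb{1}_{W_\rho<1/2}\big]\;\ge\;\mathbb{E}_{\mathcal{D}}\big[h(\bar W_\rho)\mathbb{1}_{\bar W_\rho\le 1/2}\big].$$ *)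

theory Defs
  imports "HOL-Probability.Probability"
begin

definition W_rho :: "('x \<Rightarrow> nat) measure \<Rightarrow> 'x \<times> nat \<Rightarrow> real" where
  "W_rho \<rho> z = (LINT h|\<rho>. (if h (fst z) \<noteq> snd z then 1 else 0))"

definition competent :: "('x \<times> nat) measure \<Rightarrow> ('x \<Rightarrow> nat) measure \<Rightarrow> bool" where
  "competent D \<rho> \<longleftrightarrow>
     (\<forall>t. 0 \<le> t \<and> t \<le> 1/2 \<longrightarrow>
        measure D {z \<in> space D. W_rho \<rho> z \<in> {t..<1/2}}
          \<ge> measure D {z \<in> space D. W_rho \<rho> z \<in> {1/2..1-t}})"

end

theory Submission
  imports Defs
begin

(* By the layer-cake formula, the expectation of a nonnegative function is the integral over
   s \<ge> 0 of the probability that it exceeds s, so it suffices to compare superlevel sets.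
   As g is monotone, the u in [0,1/2] with s < g u form an interval [t,1/2] or (t,1/2].
   Hence the superlevel sets of the two integrands are the events W \<in> [t,1/2) and
   W \<in> [1/2,1-t], which competence compares directly, or the events W \<in> (t,1/2) and
   W \<in> [1/2,1-t), which are increasing unions of events of the first kind. *)

lemma nn_integral_layer_cake:
  assumes "sigma_finite_measure M" and [measurable]: "f \<in> borel_measurable M"
    and nonneg: "\<And>x. x \<in> space M \<Longrightarrow> 0 \<le> f x"
  shows "(\<integral>\<^sup>+x. ennreal (f x) \<partial>M)
    = (\<integral>\<^sup>+s\<in>{0..}. emeasure M {x \<in> space M. s < f x} \<partial>lborel)"
proof -
  interpret pair_sigma_finite M lborel
    using assms(1) by (simp add: pair_sigma_finite_def lborel.sigma_finite_measure_axioms)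
  have "(\<integral>\<^sup>+x. ennreal (f x) \<partial>M) = (\<integral>\<^sup>+x. (\<integral>\<^sup>+s. indicator {0..<f x} s \<partial>lborel) \<partial>M)"
    using nonneg by (intro nn_integral_cong) simp
  also have "\<dots> = (\<integral>\<^sup>+s. (\<integral>\<^sup>+x. indicator {0..<f x} s \<partial>M) \<partial>lborel)"
    by (rule Fubini'[of "\<lambda>x s. indicator {0..<f x} s", symmetric])
      (simp add: indicator_def case_prod_beta, measurable)
  also have "\<dots> = (\<integral>\<^sup>+s\<in>{0..}. emeasure M {x \<in> space M. s < f x} \<partial>lborel)"
  proof (intro nn_integral_cong)
    fix s :: real
    have "(\<integral>\<^sup>+x. indicator {0..<f x} s \<partial>M)
        = (\<integral>\<^sup>+x. indicator {x \<in> space M. s < f x} x * indicator {0..} s \<partial>M)"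
      by (intro nn_integral_cong) (auto simp: indicator_def)
    then show "(\<integral>\<^sup>+x. indicator {0..<f x} s \<partial>M)
        = emeasure M {x \<in> space M. s < f x} * indicator {0..} s"
      by (simp add: nn_integral_multc)
  qed
  finally show ?thesis .
qed

lemma nn_integral_mono_superlevel:
  fixes f g :: "'a \<Rightarrow> real"
  assumes "sigma_finite_measure M" "f \<in> borel_measurable M" "g \<in> borel_measurable M"
    and "\<And>x. x \<in> space M \<Longrightarrow> 0 \<le> f x" "\<And>x. x \<in> space M \<Longrightarrow> 0 \<le> g x"
    and superlevel_le: "\<And>s. 0 \<le> s \<Longrightarrow>
      emeasure M {x \<in> space M. s < f x} \<le> emeasure M {x \<in> space M. s < g x}"
  shows "(\<integral>\<^sup>+x. ennreal (f x) \<partial>M) \<le> (\<integral>\<^sup>+x. ennreal (g x) \<partial>M)"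
proof -
  have "(\<integral>\<^sup>+x. ennreal (f x) \<partial>M) = (\<integral>\<^sup>+s\<in>{0..}. emeasure M {x \<in> space M. s < f x} \<partial>lborel)"
    using assms(1,2,4) by (rule nn_integral_layer_cake)
  also have "\<dots> \<le> (\<integral>\<^sup>+s\<in>{0..}. emeasure M {x \<in> space M. s < g x} \<partial>lborel)"
    by (intro nn_integral_mono) (simp add: superlevel_le split: split_indicator)
  also have "\<dots> = (\<integral>\<^sup>+x. ennreal (g x) \<partial>M)"
    using assms(1,3,5) by (rule nn_integral_layer_cake[symmetric])
  finally show ?thesis .
qed

lemma integral_mono_superlevel:
  fixes f g :: "'a \<Rightarrow> real"
  assumes "finite_measure M" "integrable M f" "integrable M g"
    and "\<And>x. x \<in> space M \<Longrightarrow> 0 \<le> f x" "\<And>x. x \<in> space M \<Longrightarrow> 0 \<le> g x"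
    and superlevel_le: "\<And>s. 0 \<le> s \<Longrightarrow>
      measure M {x \<in> space M. s < f x} \<le> measure M {x \<in> space M. s < g x}"
  shows "integral\<^sup>L M f \<le> integral\<^sup>L M g"
proof -
  interpret finite_measure M by fact
  have "ennreal (integral\<^sup>L M f) = (\<integral>\<^sup>+x. ennreal (f x) \<partial>M)"
    using assms(2,4) by (simp add: nn_integral_eq_integral)
  also have "\<dots> \<le> (\<integral>\<^sup>+x. ennreal (g x) \<partial>M)"
    using assms(2-5) superlevel_le
    by (intro nn_integral_mono_superlevel) (auto simp: emeasure_eq_measure sigma_finite_measure_axioms)
  also have "\<dots> = ennreal (integral\<^sup>L M g)"
    using assms(3,5) by (simp add: nn_integral_eq_integral)
  finally show ?thesis
    using assms(5) by (simp add: integral_nonneg_AE ennreal_le_iff)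
qed

lemma measure_vimage_Union_incseq_mono:
  assumes "finite_measure M" and [measurable]: "f \<in> borel_measurable M"
    and "incseq I" "incseq J" and [measurable]: "\<And>n. I n \<in> sets borel" "\<And>n. J n \<in> sets borel"
    and le: "\<And>n. measure M {x \<in> space M. f x \<in> I n} \<le> measure M {x \<in> space M. f x \<in> J n}"
  shows "measure M {x \<in> space M. f x \<in> (\<Union>n. I n)}
    \<le> measure M {x \<in> space M. f x \<in> (\<Union>n. J n)}"
proof -
  interpret finite_measure M by fact
  have "incseq (\<lambda>n. {x \<in> space M. f x \<in> I n})" "incseq (\<lambda>n. {x \<in> space M. f x \<in> J n})"
    using \<open>incseq I\<close> \<open>incseq J\<close> unfolding incseq_def by blast+
  then have lim_I: "(\<lambda>n. measure M {x \<in> space M. f x \<in> I n})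
      \<longlonglongrightarrow> measure M (\<Union>n. {x \<in> space M. f x \<in> I n})"
    and lim_J: "(\<lambda>n. measure M {x \<in> space M. f x \<in> J n})
      \<longlonglongrightarrow> measure M (\<Union>n. {x \<in> space M. f x \<in> J n})"
    by (auto intro!: finite_Lim_measure_incseq)
  have vimage_UN: "{x \<in> space M. f x \<in> (\<Union>n. K n)} = (\<Union>n. {x \<in> space M. f x \<in> K n})" for K
    by auto
  show ?thesis
    unfolding vimage_UN using le by (intro LIMSEQ_le[OF lim_I lim_J]) auto
qed

lemma upclosed_subset_atLeastAtMost_cases:
  fixes S :: "real set"
  assumes "S \<subseteq> {a..b}" "a \<le> b"
    and upclosed: "\<And>u v. u \<in> S \<Longrightarrow> u \<le> v \<Longrightarrow> v \<le> b \<Longrightarrow> v \<in> S"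
  obtains t where "t \<in> {a..b}" "S = {t..b}" | t where "t \<in> {a..b}" "S = {t<..b}"
proof (cases "S = {}")
  case True
  then show ?thesis
    using that(2)[of b] \<open>a \<le> b\<close> by simp
next
  case False
  then obtain u where "u \<in> S"
    by blast
  have bdd: "bdd_below S"
    using assms(1) by (rule bdd_below_mono[OF bdd_below_Icc])
  have lower: "Inf S \<le> v" if "v \<in> S" for v
    using cInf_lower[OF that bdd] .
  have "a \<le> Inf S"
    using False assms(1) by (intro cInf_greatest) auto
  moreover have "Inf S \<le> b"
    using lower[OF \<open>u \<in> S\<close>] \<open>u \<in> S\<close> assms(1) by auto
  ultimately have Inf_in: "Inf S \<in> {a..b}"
    by simp
  have above_Inf: "v \<in> S" if "Inf S < v" "v \<le> b" for v
  proof -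
    obtain u where "u \<in> S" "u < v"
      using \<open>Inf S < v\<close> False bdd by (auto simp: cInf_less_iff)
    then show ?thesis
      using upclosed \<open>v \<le> b\<close> by simp
  qed
  show ?thesis
  proof (cases "Inf S \<in> S")
    case True
    have "S = {Inf S..b}"
      using assms(1) lower upclosed[OF True] by auto
    then show ?thesis
      using that(1) Inf_in by blast
  next
    case False
    have "S = {Inf S<..b}"
      using assms(1) lower above_Inf False by (auto simp: less_le)
    then show ?thesis
      using that(2) Inf_in by blast
  qed
qed

definition competent_rv :: "'a measure \<Rightarrow> ('a \<Rightarrow> real) \<Rightarrow> bool" where
  "competent_rv D w \<longleftrightarrow>
     (\<forall>t. 0 \<le> t \<and> t \<le> 1/2 \<longrightarrow>
        measure D {z \<in> space D. w z \<in> {t..<1/2}}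
          \<ge> measure D {z \<in> space D. w z \<in> {1/2..1-t}})"

lemma competent_iff_competent_rv: "competent D \<rho> \<longleftrightarrow> competent_rv D (W_rho \<rho>)"
  by (simp add: competent_def competent_rv_def)

lemma competent_rvD:
  assumes "competent_rv D w" "0 \<le> t"
  shows "measure D {z \<in> space D. w z \<in> {1/2..1-t}} \<le> measure D {z \<in> space D. w z \<in> {t..<1/2}}"
proof (cases "t \<le> 1/2")
  case True
  then show ?thesis
    using assms by (simp add: competent_rv_def)
next
  case False
  then have "{z \<in> space D. w z \<in> {1/2..1-t}} = {}"
    by auto
  then show ?thesis
    by (metis measure_empty measure_nonneg)
qed

lemma greaterThanLessThan_eq_UN_atLeastLessThan:
  "{a<..<b} = (\<Union>n. {a + inverse (Suc n)..<b::real})"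
proof (intro set_eqI iffI)
  fix u assume "u \<in> {a<..<b}"
  then obtain n where "inverse (Suc n) < u - a"
    using reals_Archimedean[of "u - a"] by auto
  then show "u \<in> (\<Union>n. {a + inverse (Suc n)..<b})"
    using \<open>u \<in> {a<..<b}\<close> by (auto intro!: exI[of _ n])
qed (auto simp flip: of_nat_Suc intro: less_le_trans[of a "a + inverse (Suc _)"])

lemma atLeastLessThan_eq_UN_atLeastAtMost:
  "{a..<b} = (\<Union>n. {a..b - inverse (Suc n)::real})"
proof (intro set_eqI iffI)
  fix u assume "u \<in> {a..<b}"
  then obtain n where "inverse (Suc n) < b - u"
    using reals_Archimedean[of "b - u"] by auto
  then show "u \<in> (\<Union>n. {a..b - inverse (Suc n)})"
    using \<open>u \<in> {a..<b}\<close> by (auto intro!: exI[of _ n])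
qed (auto simp flip: of_nat_Suc intro: le_less_trans[of _ "b - inverse (Suc _)" b])

lemma competent_rvD_open:
  assumes "finite_measure D" "w \<in> borel_measurable D" "competent_rv D w" "0 \<le> t"
  shows "measure D {z \<in> space D. w z \<in> {1/2..<1-t}} \<le> measure D {z \<in> space D. w z \<in> {t<..<1/2}}"
proof -
  have inverse_Suc_antimono: "inverse (real (Suc n)) \<le> inverse (real (Suc m))" if "m \<le> n" for m n
    using that by (simp add: le_imp_inverse_le)
  have incseqs: "incseq (\<lambda>n. {t + inverse (Suc n)..<1/2})" "incseq (\<lambda>n. {1/2..1 - t - inverse (Suc n)})"
    using inverse_Suc_antimono by (force simp: incseq_def)+
  show ?thesis
    unfolding greaterThanLessThan_eq_UN_atLeastLessThan[of t]
      atLeastLessThan_eq_UN_atLeastAtMost[of "1/2" "1 - t"]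
  proof (rule measure_vimage_Union_incseq_mono)
    fix n
    show "measure D {z \<in> space D. w z \<in> {1/2..1 - t - inverse (Suc n)}}
      \<le> measure D {z \<in> space D. w z \<in> {t + inverse (Suc n)..<1/2}}"
      using competent_rvD[OF assms(3), of "t + inverse (Suc n)"] assms(4) by (simp add: diff_diff_eq)
  qed (use assms incseqs in simp_all)
qed

lemma competent_rv_superlevel_le:
  fixes g :: "real \<Rightarrow> real"
  assumes "finite_measure D" "w \<in> borel_measurable D" "competent_rv D w"
    and w01: "\<And>z. z \<in> space D \<Longrightarrow> w z \<in> {0..1}"
    and "mono_on {0..1} g"
  shows "measure D {z \<in> space D. 1/2 \<le> w z \<and> s < g (1 - w z)}
    \<le> measure D {z \<in> space D. w z < 1/2 \<and> s < g (w z)}"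
proof -
  define S where "S = {u \<in> {0..1/2}. s < g u}"
  have S_subset: "S \<subseteq> {0..1/2}"
    by (auto simp: S_def)
  have S_upclosed: "v \<in> S" if "u \<in> S" "u \<le> v" "v \<le> 1/2" for u v
    using that mono_onD[OF assms(5), of u v] by (auto simp: S_def)
  have below_half: "{z \<in> space D. w z < 1/2 \<and> s < g (w z)} = {z \<in> space D. w z \<in> S - {1/2}}"
    using w01 by (auto simp: S_def)
  have above_half: "{z \<in> space D. 1/2 \<le> w z \<and> s < g (1 - w z)} = {z \<in> space D. 1 - w z \<in> S}"
    using w01 by (auto simp: S_def)
  consider t where "t \<in> {0..1/2}" "S = {t..1/2}" | t where "t \<in> {0..1/2}" "S = {t<..1/2}"
    by (rule upclosed_subset_atLeastAtMost_cases[OF S_subset _ S_upclosed]) auto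
  then show ?thesis
  proof cases
    case (1 t)
    then have S_sets: "{z \<in> space D. w z \<in> S - {1/2}} = {z \<in> space D. w z \<in> {t..<1/2}}"
      "{z \<in> space D. 1 - w z \<in> S} = {z \<in> space D. w z \<in> {1/2..1-t}}"
      by auto
    show ?thesis
      unfolding below_half above_half S_sets by (rule competent_rvD[OF assms(3)]) (use 1 in simp)
  next
    case (2 t)
    then have S_sets: "{z \<in> space D. w z \<in> S - {1/2}} = {z \<in> space D. w z \<in> {t<..<1/2}}"
      "{z \<in> space D. 1 - w z \<in> S} = {z \<in> space D. w z \<in> {1/2..<1-t}}"
      by auto
    show ?thesis
      unfolding below_half above_half S_sets by (rule competent_rvD_open[OF assms(1-3)]) (use 2 in simp)
  qed
qed

lemma competent_rv_integral_le:
  fixes g :: "real \<Rightarrow> real"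
  assumes "finite_measure D" and [measurable]: "w \<in> borel_measurable D" and "competent_rv D w"
    and w01: "\<And>z. z \<in> space D \<Longrightarrow> w z \<in> {0..1}"
    and g_mono: "mono_on {0..1} g" and "g 0 = 0"
  shows "(LINT z|D. g (1 - w z) * indicator {v. v \<le> 1/2} (1 - w z))
    \<le> (LINT z|D. g (w z) * indicator {v. v < 1/2} (w z))"
proof -
  interpret finite_measure D by fact
  have g_bounds: "0 \<le> g u" "g u \<le> g 1" if "u \<in> {0..1}" for u
    using mono_onD[OF g_mono, of 0 u] mono_onD[OF g_mono, of u 1] that \<open>g 0 = 0\<close> by auto
  have "w \<in> D \<rightarrow>\<^sub>M restrict_space borel {0..1}" "(\<lambda>z. 1 - w z) \<in> D \<rightarrow>\<^sub>M restrict_space borel {0..1}"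
    using w01 by (auto intro!: measurable_restrict_space2)
  then have [measurable]: "(\<lambda>z. g (w z)) \<in> borel_measurable D" "(\<lambda>z. g (1 - w z)) \<in> borel_measurable D"
    by (auto intro: measurable_compose[OF _ borel_measurable_mono_on_fnc[OF g_mono]])
  define f1 where "f1 z = g (w z) * indicator {v. v < 1/2} (w z)" for z
  define f2 where "f2 z = g (1 - w z) * indicator {v. v \<le> 1/2} (1 - w z)" for z
  have [measurable]: "f1 \<in> borel_measurable D" "f2 \<in> borel_measurable D"
    unfolding f1_def f2_def by measurable
  have f_bounds: "0 \<le> f1 z" "f1 z \<le> g 1" "0 \<le> f2 z" "f2 z \<le> g 1" if "z \<in> space D" for z
    using g_bounds[of "w z"] g_bounds[of "1 - w z"] w01[OF that] by (auto simp: f1_def f2_def indicator_def)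
  have "integral\<^sup>L D f2 \<le> integral\<^sup>L D f1"
  proof (rule integral_mono_superlevel)
    show "integrable D f1" "integrable D f2"
      using f_bounds by (auto intro!: integrable_const_bound[where B = "g 1"])
    fix s :: real
    assume "0 \<le> s"
    then have "{z \<in> space D. s < f2 z} = {z \<in> space D. 1/2 \<le> w z \<and> s < g (1 - w z)}"
      "{z \<in> space D. s < f1 z} = {z \<in> space D. w z < 1/2 \<and> s < g (w z)}"
      by (auto simp: f1_def f2_def indicator_def)
    then show "measure D {z \<in> space D. s < f2 z} \<le> measure D {z \<in> space D. s < f1 z}"
      using competent_rv_superlevel_le[OF _ _ assms(3) w01 g_mono] finite_measure_axioms by simp
  qed (use f_bounds finite_measure_axioms in auto)
  then show ?thesis
    by (simp only: f1_def[abs_def] f2_def[abs_def])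
qed

lemma W_rho_eq_measure:
  assumes "prob_space \<rho>" "{h \<in> space \<rho>. h (fst z) \<noteq> snd z} \<in> sets \<rho>"
  shows "W_rho \<rho> z = measure \<rho> {h \<in> space \<rho>. h (fst z) \<noteq> snd z}"
proof -
  interpret prob_space \<rho> by fact
  have "W_rho \<rho> z = (LINT h|\<rho>. indicator {h \<in> space \<rho>. h (fst z) \<noteq> snd z} h)"
    unfolding W_rho_def by (intro Bochner_Integration.integral_cong) (auto simp: indicator_def)
  also have "\<dots> = measure \<rho> {h \<in> space \<rho>. h (fst z) \<noteq> snd z}"
    using assms(2) by simp
  finally show ?thesis .
qed

theorem lemma2:
  fixes D :: "('x \<times> nat) measure" and \<rho> :: "('x \<Rightarrow> nat) measure"
    and K :: nat and g :: "real \<Rightarrow> real"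
  assumes "prob_space D"
    and "space D \<subseteq> UNIV \<times> {1..K}"
    and "prob_space \<rho>"
    and "\<forall>h\<in>space \<rho>. \<forall>x. h x \<in> {1..K}"
    and "\<forall>x y. {h \<in> space \<rho>. h x \<noteq> y} \<in> sets \<rho>"
    and "W_rho \<rho> \<in> borel_measurable D"
    and "competent D \<rho>"
    and "mono_on {0..1} g" and "g 0 = 0"
  shows "(LINT z|D. g (W_rho \<rho> z) * indicator {w. w < 1/2} (W_rho \<rho> z))
       \<ge> (LINT z|D. g (1 - W_rho \<rho> z) * indicator {w. w \<le> 1/2} (1 - W_rho \<rho> z))"
proof -
  interpret \<rho>: prob_space \<rho> by fact
  have "W_rho \<rho> z \<in> {0..1}" for z
    using W_rho_eq_measure[OF assms(3)] assms(5) by simp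
  then show ?thesis
    using competent_rv_integral_le[OF prob_space.finite_measure[OF assms(1)] assms(6) _ _ assms(8,9)]
      assms(7)
    by (simp add: competent_iff_competent_rv)
qed

end
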